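(* Let $R$ be a ring and $\mathcal C_R$ its set of regular elements. The following are equivalent: (1) $Q(R)$ is semi-simple; (2) the rings $Q_{l,cl}(R)$ and $Q_{r,cl}(R)$ exist and are semi-simple; (3) the rings $Q_l(R)$ and $Q_r(R)$ are semi-simple. If one of these holds then $S_0(R)=\mathcal C_R$ and $Q(R)\cong Q_{l,cl}(R)\cong Q_{r,cl}(R)\cong Q_l(R)\cong Q_r(R)$.
   Context: Rings are associative with $1$. A multiplicatively closed subset $S$ ($1\in S$, $0\notin S$) is a left Ore set if $Sr\cap Rs\ne\emptyset$ for all $r\in R$, $s\in S$, and a left denominator set if moreover $rs=0$ ($s\in S$) implies $tr=0$ for some $t\in S$; right Ore and right denominator sets are defined symmetrically. $Q_l(R):=S_{l,0}(R)^{-1}R$ where $S_{l,0}(R)$ is the largest left denominator set contained in $\mathcal C_R$; $Q_r(R):=RS_{r,0}(R)^{-1}$ with $S_{r,0}(R)$ the largest right denominator set contained in $\mathcal C_R$; $Q(R):=S_0(R)^{-1}R$ where $S_0(R)$ is the largest subset of $\mathcal C_R$ that is both a left and a right denominator set. $Q_{l,cl}(R):=\mathcal C_R^{-1}R$ (exists iff $\mathcal C_R$ is left Ore) and $Q_{r,cl}(R):=R\mathcal C_R^{-1}$ (exists iff $\mathcal C_R$ is right Ore). *)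

theory Defs
  imports "HOL-Algebra.Algebra"
begin

definition regular_elems :: "'a ring \<Rightarrow> 'a set" where
  "regular_elems R = {c \<in> carrier R. \<forall>r \<in> carrier R.
      (c \<otimes>\<^bsub>R\<^esub> r = \<zero>\<^bsub>R\<^esub> \<longrightarrow> r = \<zero>\<^bsub>R\<^esub>) \<and> (r \<otimes>\<^bsub>R\<^esub> c = \<zero>\<^bsub>R\<^esub> \<longrightarrow> r = \<zero>\<^bsub>R\<^esub>)}"

definition mult_closed_set :: "'a ring \<Rightarrow> 'a set \<Rightarrow> bool" where
  "mult_closed_set R S \<longleftrightarrow> S \<subseteq> carrier R \<and> \<one>\<^bsub>R\<^esub> \<in> S \<and> \<zero>\<^bsub>R\<^esub> \<notin> S \<and>
      (\<forall>s \<in> S. \<forall>t \<in> S. s \<otimes>\<^bsub>R\<^esub> t \<in> S)"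

definition left_ore_set :: "'a ring \<Rightarrow> 'a set \<Rightarrow> bool" where
  "left_ore_set R S \<longleftrightarrow> mult_closed_set R S \<and>
      (\<forall>r \<in> carrier R. \<forall>s \<in> S. \<exists>t \<in> S. \<exists>a \<in> carrier R. t \<otimes>\<^bsub>R\<^esub> r = a \<otimes>\<^bsub>R\<^esub> s)"

definition right_ore_set :: "'a ring \<Rightarrow> 'a set \<Rightarrow> bool" where
  "right_ore_set R S \<longleftrightarrow> mult_closed_set R S \<and>
      (\<forall>r \<in> carrier R. \<forall>s \<in> S. \<exists>t \<in> S. \<exists>a \<in> carrier R. r \<otimes>\<^bsub>R\<^esub> t = s \<otimes>\<^bsub>R\<^esub> a)"

definition left_den_set :: "'a ring \<Rightarrow> 'a set \<Rightarrow> bool" where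
  "left_den_set R S \<longleftrightarrow> left_ore_set R S \<and>
      (\<forall>r \<in> carrier R. \<forall>s \<in> S. r \<otimes>\<^bsub>R\<^esub> s = \<zero>\<^bsub>R\<^esub> \<longrightarrow> (\<exists>t \<in> S. t \<otimes>\<^bsub>R\<^esub> r = \<zero>\<^bsub>R\<^esub>))"

definition right_den_set :: "'a ring \<Rightarrow> 'a set \<Rightarrow> bool" where
  "right_den_set R S \<longleftrightarrow> right_ore_set R S \<and>
      (\<forall>r \<in> carrier R. \<forall>s \<in> S. s \<otimes>\<^bsub>R\<^esub> r = \<zero>\<^bsub>R\<^esub> \<longrightarrow> (\<exists>t \<in> S. r \<otimes>\<^bsub>R\<^esub> t = \<zero>\<^bsub>R\<^esub>))"

definition S_l0 :: "'a ring \<Rightarrow> 'a set" where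
  "S_l0 R = (THE S. left_den_set R S \<and> S \<subseteq> regular_elems R \<and>
      (\<forall>T. left_den_set R T \<and> T \<subseteq> regular_elems R \<longrightarrow> T \<subseteq> S))"

definition S_r0 :: "'a ring \<Rightarrow> 'a set" where
  "S_r0 R = (THE S. right_den_set R S \<and> S \<subseteq> regular_elems R \<and>
      (\<forall>T. right_den_set R T \<and> T \<subseteq> regular_elems R \<longrightarrow> T \<subseteq> S))"

definition S_0 :: "'a ring \<Rightarrow> 'a set" where
  "S_0 R = (THE S. left_den_set R S \<and> right_den_set R S \<and> S \<subseteq> regular_elems R \<and>
      (\<forall>T. left_den_set R T \<and> right_den_set R T \<and> T \<subseteq> regular_elems R \<longrightarrow> T \<subseteq> S))"

definition left_ring_of_fractions :: "'a ring \<Rightarrow> 'a set \<Rightarrow> 'b ring \<Rightarrow> ('a \<Rightarrow> 'b) \<Rightarrow> bool" where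
  "left_ring_of_fractions R S Q \<phi> \<longleftrightarrow> ring Q \<and> \<phi> \<in> ring_hom R Q \<and>
     (\<forall>s \<in> S. \<phi> s \<in> Units Q) \<and>
     (\<forall>q \<in> carrier Q. \<exists>s \<in> S. \<exists>r \<in> carrier R. q = inv\<^bsub>Q\<^esub> (\<phi> s) \<otimes>\<^bsub>Q\<^esub> \<phi> r) \<and>
     (\<forall>r \<in> carrier R. \<phi> r = \<zero>\<^bsub>Q\<^esub> \<longleftrightarrow> (\<exists>s \<in> S. s \<otimes>\<^bsub>R\<^esub> r = \<zero>\<^bsub>R\<^esub>))"

definition right_ring_of_fractions :: "'a ring \<Rightarrow> 'a set \<Rightarrow> 'b ring \<Rightarrow> ('a \<Rightarrow> 'b) \<Rightarrow> bool" where
  "right_ring_of_fractions R S Q \<phi> \<longleftrightarrow> ring Q \<and> \<phi> \<in> ring_hom R Q \<and>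
     (\<forall>s \<in> S. \<phi> s \<in> Units Q) \<and>
     (\<forall>q \<in> carrier Q. \<exists>s \<in> S. \<exists>r \<in> carrier R. q = \<phi> r \<otimes>\<^bsub>Q\<^esub> inv\<^bsub>Q\<^esub> (\<phi> s)) \<and>
     (\<forall>r \<in> carrier R. \<phi> r = \<zero>\<^bsub>Q\<^esub> \<longleftrightarrow> (\<exists>s \<in> S. r \<otimes>\<^bsub>R\<^esub> s = \<zero>\<^bsub>R\<^esub>))"

text \<open>Fraction rings are taken with carrier type ('a * 'a) set: the canonical construction
  (equivalence classes of pairs) lives in this type, so they always exist there when S is a
  denominator set; they are unique up to isomorphism.\<close>

type_synonym 'a frac_ring = "('a \<times> 'a) set ring"

text \<open>Semisimple ring: the left regular module is semisimple, i.e. every left ideal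
  (submodule of R as a left module over itself) is a direct summand.\<close>

definition left_ideal :: "'a ring \<Rightarrow> 'a set \<Rightarrow> bool" where
  "left_ideal R I \<longleftrightarrow> additive_subgroup I R \<and>
     (\<forall>a \<in> carrier R. \<forall>x \<in> I. a \<otimes>\<^bsub>R\<^esub> x \<in> I)"

definition semisimple_ring :: "'a ring \<Rightarrow> bool" where
  "semisimple_ring R \<longleftrightarrow> ring R \<and>
     (\<forall>I. left_ideal R I \<longrightarrow> (\<exists>J. left_ideal R J \<and> I \<inter> J = {\<zero>\<^bsub>R\<^esub>} \<and>
          {x \<oplus>\<^bsub>R\<^esub> y | x y. x \<in> I \<and> y \<in> J} = carrier R))"

end

theory Submission
  imports Defs
begin

text \<open>
  Let \<open>Q\<close> be a semisimple left ring of fractions of \<open>R\<close> with respect to a set \<open>S\<close> of regular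
  elements. For regular \<open>c\<close>, \<open>\<phi> c\<close> is cancellable on one side in \<open>Q\<close>, and in a semisimple ring
  such elements are units, because complements of left ideals make semisimple rings
  Dedekind-finite. Writing \<open>\<phi> r \<otimes> (\<phi> c)\<inverse>\<close> as a left fraction and clearing denominators then
  shows that \<open>\<C>\<^sub>R\<close> is a left Ore set; the mirror argument gives the right Ore condition.
  For \<open>Q(R)\<close> both apply, since \<open>S\<^sub>0(R)\<close> is two-sided and so \<open>Q(R)\<close> is also a right ring of
  fractions. Once \<open>\<C>\<^sub>R\<close> is a left and right Ore set it is the largest denominator set of
  each kind, left and right rings of fractions with respect to it coincide, and all the rings
  in question are isomorphic because a left ring of fractions is unique up to isomorphism.
\<close>

text \<open>The notions of \<open>Defs\<close> are stated for \<open>'a ring\<close>, not for ring schemes.\<close>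

locale plain_ring = ring R for R :: "'a ring" (structure)

lemma plain_ring_iff_ring: "plain_ring R \<longleftrightarrow> ring R"
  by (simp add: plain_ring_def)

section \<open>Opposite rings\<close>

text \<open>Each right-handed statement below is the left-handed one for the opposite ring.\<close>

definition opposite_ring :: "('a, 'b) ring_scheme \<Rightarrow> ('a, 'b) ring_scheme" where
  "opposite_ring R = R\<lparr>mult := \<lambda>x y. y \<otimes>\<^bsub>R\<^esub> x\<rparr>"

lemma opposite_ring_simps [simp]:
  "carrier (opposite_ring R) = carrier R"
  "\<one>\<^bsub>opposite_ring R\<^esub> = \<one>\<^bsub>R\<^esub>"
  "\<zero>\<^bsub>opposite_ring R\<^esub> = \<zero>\<^bsub>R\<^esub>"
  "x \<oplus>\<^bsub>opposite_ring R\<^esub> y = x \<oplus>\<^bsub>R\<^esub> y"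
  "x \<otimes>\<^bsub>opposite_ring R\<^esub> y = y \<otimes>\<^bsub>R\<^esub> x"
  by (simp_all add: opposite_ring_def)

lemma opposite_opposite_ring [simp]: "opposite_ring (opposite_ring R) = R"
  by (simp add: opposite_ring_def)

lemma ring_opposite_ring:
  assumes "ring R" shows "ring (opposite_ring R)"
proof -
  interpret ring R by fact
  have "add_monoid (opposite_ring R) = add_monoid R" by (simp add: opposite_ring_def)
  then have "abelian_group (opposite_ring R)"
    using abelian_group_axioms by (simp add: abelian_group_def abelian_monoid_def abelian_group_axioms_def)
  moreover have "monoid (opposite_ring R)"
    by (rule monoidI) (auto simp: m_assoc)
  ultimately show ?thesis
    by (rule ringI) (simp_all add: l_distr r_distr)
qed

lemma Units_opposite_ring [simp]: "Units (opposite_ring R) = Units R"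
  by (auto simp: Units_def)

lemma inv_opposite_ring [simp]: "inv\<^bsub>opposite_ring R\<^esub> x = inv\<^bsub>R\<^esub> x"
  unfolding m_inv_def by (simp add: conj_commute)

lemma ring_hom_opposite_ring [simp]:
  "ring_hom (opposite_ring R) (opposite_ring Q) = ring_hom R Q"
  by (auto simp: ring_hom_def)

lemma submonoid_opposite_ring [simp]: "submonoid N (opposite_ring R) \<longleftrightarrow> submonoid N R"
  by (auto simp: submonoid_def)

lemma regular_elems_opposite_ring [simp]: "regular_elems (opposite_ring R) = regular_elems R"
  by (auto simp: regular_elems_def)

lemma mult_closed_set_opposite_ring [simp]:
  "mult_closed_set (opposite_ring R) S \<longleftrightarrow> mult_closed_set R S"
  by (auto simp: mult_closed_set_def)

lemma left_ore_set_opposite_ring [simp]: "left_ore_set (opposite_ring R) S \<longleftrightarrow> right_ore_set R S"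
  by (simp add: left_ore_set_def right_ore_set_def)

lemma right_ore_set_opposite_ring [simp]: "right_ore_set (opposite_ring R) S \<longleftrightarrow> left_ore_set R S"
  by (simp add: left_ore_set_def right_ore_set_def)

lemma left_den_set_opposite_ring [simp]: "left_den_set (opposite_ring R) S \<longleftrightarrow> right_den_set R S"
  by (simp add: left_den_set_def right_den_set_def)

lemma S_l0_opposite_ring: "S_l0 (opposite_ring R) = S_r0 R"
  by (simp add: S_l0_def S_r0_def)

lemma left_ring_of_fractions_opposite_ring [simp]:
  "left_ring_of_fractions (opposite_ring R) S (opposite_ring Q) \<phi> \<longleftrightarrow> right_ring_of_fractions R S Q \<phi>"
  using ring_opposite_ring[of Q] ring_opposite_ring[of "opposite_ring Q"]
  by (auto simp: left_ring_of_fractions_def right_ring_of_fractions_def)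

lemma right_ring_of_fractions_opposite_ring [simp]:
  "right_ring_of_fractions (opposite_ring R) S (opposite_ring Q) \<phi> \<longleftrightarrow> left_ring_of_fractions R S Q \<phi>"
  using left_ring_of_fractions_opposite_ring[of "opposite_ring R" S "opposite_ring Q" \<phi>] by simp

lemma (in plain_ring) plain_ring_opposite: "plain_ring (opposite_ring R)"
  by (simp add: plain_ring_iff_ring ring_opposite_ring ring_axioms)

section \<open>Regular elements and denominator sets\<close>

context plain_ring
begin

lemma regular_elemsD:
  assumes "c \<in> regular_elems R"
  shows "c \<in> carrier R" "\<And>r. r \<in> carrier R \<Longrightarrow> c \<otimes> r = \<zero> \<Longrightarrow> r = \<zero>"
    "\<And>r. r \<in> carrier R \<Longrightarrow> r \<otimes> c = \<zero> \<Longrightarrow> r = \<zero>"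
  using assms unfolding regular_elems_def by blast+

lemma submonoid_regular_elems: "submonoid (regular_elems R) R"
proof
  show "regular_elems R \<subseteq> carrier R" using regular_elemsD(1) by blast
  show "\<one> \<in> regular_elems R" by (simp add: regular_elems_def)
  fix c d assume c: "c \<in> regular_elems R" and d: "d \<in> regular_elems R"
  note cd = regular_elemsD(1)[OF c] regular_elemsD(1)[OF d]
  have "\<forall>r \<in> carrier R. c \<otimes> d \<otimes> r = \<zero> \<longrightarrow> r = \<zero>"
    using cd regular_elemsD(2)[OF c] regular_elemsD(2)[OF d] by (metis m_assoc m_closed)
  moreover have "\<forall>r \<in> carrier R. r \<otimes> (c \<otimes> d) = \<zero> \<longrightarrow> r = \<zero>"
    using cd regular_elemsD(3)[OF c] regular_elemsD(3)[OF d] by (metis m_assoc m_closed)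
  ultimately show "c \<otimes> d \<in> regular_elems R"
    using cd unfolding regular_elems_def by blast
qed

lemma mult_closed_set_iff_submonoid:
  assumes "S \<subseteq> regular_elems R" and "\<one> \<noteq> \<zero>"
  shows "mult_closed_set R S \<longleftrightarrow> submonoid S R"
proof -
  have "\<zero> \<notin> regular_elems R"
    using assms(2) regular_elemsD(2)[of \<zero> \<one>] by auto
  then show ?thesis
    using assms(1) regular_elemsD(1) unfolding mult_closed_set_def submonoid_def by blast
qed

lemma left_den_set_iff_left_ore_set:
  assumes "S \<subseteq> regular_elems R"
  shows "left_den_set R S \<longleftrightarrow> left_ore_set R S"
proof -
  have "\<one> \<in> S" if "left_ore_set R S"
    using that by (simp add: left_ore_set_def mult_closed_set_def)
  moreover have "r = \<zero>" if "r \<in> carrier R" "s \<in> S" "r \<otimes> s = \<zero>" for r s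
    using that assms regular_elemsD(3) by blast
  ultimately show ?thesis
    unfolding left_den_set_def by (metis r_null one_closed)
qed

end

lemma (in plain_ring) right_den_set_iff_right_ore_set:
  assumes "S \<subseteq> regular_elems R"
  shows "right_den_set R S \<longleftrightarrow> right_ore_set R S"
  using plain_ring.left_den_set_iff_left_ore_set[OF plain_ring_opposite] assms
  by simp

section \<open>The largest denominator sets\<close>

definition generated_submonoid :: "('a, 'b) monoid_scheme \<Rightarrow> 'a set \<Rightarrow> 'a set" where
  "generated_submonoid M U = \<Inter>{N. submonoid N M \<and> U \<subseteq> N}"

lemma (in monoid) submonoid_generated_submonoid:
  assumes "U \<subseteq> carrier G"
  shows "submonoid (generated_submonoid G U) G"
proof
  have "submonoid (carrier G) G" by unfold_locales auto
  then show "generated_submonoid G U \<subseteq> carrier G"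
    using assms unfolding generated_submonoid_def by blast
qed (auto simp: generated_submonoid_def submonoid_def)

lemma generated_submonoid_minimal:
  "submonoid N M \<Longrightarrow> U \<subseteq> N \<Longrightarrow> generated_submonoid M U \<subseteq> N"
  unfolding generated_submonoid_def by blast

lemma generated_submonoid_superset: "U \<subseteq> generated_submonoid M U"
  unfolding generated_submonoid_def by blast

lemma generated_submonoid_opposite_ring [simp]:
  "generated_submonoid (opposite_ring R) U = generated_submonoid R U"
  by (simp add: generated_submonoid_def)

lemma (in plain_ring) submonoid_left_ore_elems:
  assumes "submonoid M R"
  shows "submonoid {s \<in> carrier R. \<forall>r \<in> carrier R. \<exists>t \<in> M. \<exists>a \<in> carrier R. t \<otimes> r = a \<otimes> s} R"
    (is "submonoid ?Ore R")
proof
  interpret M: submonoid M R by fact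
  have "\<one> \<otimes> r = r \<otimes> \<one>" if "r \<in> carrier R" for r
    using that by simp
  then show "\<one> \<in> ?Ore"
    using M.one_closed by blast
  fix s1 s2 assume s1: "s1 \<in> ?Ore" and s2: "s2 \<in> ?Ore"
  have "\<exists>t \<in> M. \<exists>a \<in> carrier R. t \<otimes> r = a \<otimes> (s1 \<otimes> s2)" if r: "r \<in> carrier R" for r
  proof -
    obtain t1 a1 where t1: "t1 \<in> M" "a1 \<in> carrier R" "t1 \<otimes> r = a1 \<otimes> s2"
      using s2 r by auto
    obtain t2 a2 where t2: "t2 \<in> M" "a2 \<in> carrier R" "t2 \<otimes> a1 = a2 \<otimes> s1"
      using s1 t1(2) by auto
    have carr: "t1 \<in> carrier R" "t2 \<in> carrier R" "s1 \<in> carrier R" "s2 \<in> carrier R"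
      using t1(1) t2(1) s1 s2 M.subset by auto
    have "(t2 \<otimes> t1) \<otimes> r = t2 \<otimes> (a1 \<otimes> s2)"
      using carr r by (simp add: m_assoc t1(3))
    also have "\<dots> = a2 \<otimes> (s1 \<otimes> s2)"
      using carr t1(2) t2(2) by (simp add: m_assoc[symmetric] t2(3))
    finally have "(t2 \<otimes> t1) \<otimes> r = a2 \<otimes> (s1 \<otimes> s2)" .
    then show ?thesis
      using t1 t2 M.m_closed by blast
  qed
  then show "s1 \<otimes> s2 \<in> ?Ore"
    using s1 s2 by auto
qed auto

text \<open>Each generator satisfies the Ore condition with witnesses in its own member of the family;
  as the elements satisfying it form a submonoid, so does every element of the generated one.\<close>

lemma (in plain_ring) left_ore_set_generated_submonoid_Union:
  assumes "\<one> \<noteq> \<zero>" and F: "\<And>T. T \<in> F \<Longrightarrow> left_ore_set R T \<and> T \<subseteq> regular_elems R"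
  shows "left_ore_set R (generated_submonoid R (\<Union>F)) \<and> generated_submonoid R (\<Union>F) \<subseteq> regular_elems R"
proof -
  define M where "M = generated_submonoid R (\<Union>F)"
  define Ore where "Ore = {s \<in> carrier R. \<forall>r \<in> carrier R. \<exists>t \<in> M. \<exists>a \<in> carrier R. t \<otimes> r = a \<otimes> s}"
  have "\<Union>F \<subseteq> regular_elems R" using F by blast
  then have M_regular: "M \<subseteq> regular_elems R"
    unfolding M_def by (rule generated_submonoid_minimal[OF submonoid_regular_elems])
  have "\<Union>F \<subseteq> carrier R"
    using \<open>\<Union>F \<subseteq> regular_elems R\<close> submonoid.subset[OF submonoid_regular_elems] by blast
  then have M: "submonoid M R"
    unfolding M_def by (rule submonoid_generated_submonoid)
  have "\<Union>F \<subseteq> Ore"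
  proof
    fix u assume "u \<in> \<Union>F"
    then obtain T where T: "T \<in> F" "u \<in> T" by blast
    have "T \<subseteq> M" using T(1) generated_submonoid_superset[of "\<Union>F" R] unfolding M_def by blast
    moreover have "\<forall>r \<in> carrier R. \<exists>t \<in> T. \<exists>a \<in> carrier R. t \<otimes> r = a \<otimes> u"
      using F[OF T(1)] T(2) unfolding left_ore_set_def by blast
    moreover have "u \<in> carrier R"
      using T \<open>\<Union>F \<subseteq> carrier R\<close> by blast
    ultimately show "u \<in> Ore"
      unfolding Ore_def by blast
  qed
  then have "M \<subseteq> Ore"
    unfolding M_def by (rule generated_submonoid_minimal[OF submonoid_left_ore_elems[OF M, folded Ore_def, unfolded M_def]])
  moreover have "mult_closed_set R M"
    using M mult_closed_set_iff_submonoid[OF M_regular assms(1)] by blast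
  ultimately show ?thesis
    using M_regular unfolding left_ore_set_def M_def Ore_def by blast
qed

lemma the_largest_eq_Union:
  assumes "P (\<Union>{T. P T \<and> T \<subseteq> A})"
  shows "(THE S. P S \<and> S \<subseteq> A \<and> (\<forall>T. P T \<and> T \<subseteq> A \<longrightarrow> T \<subseteq> S)) = \<Union>{T. P T \<and> T \<subseteq> A}"
  by (rule the_equality) (use assms in blast)+

context plain_ring
begin

lemma S_l0_eq_Union:
  assumes "\<one> \<noteq> \<zero>"
  shows "S_l0 R = \<Union>{T. left_den_set R T \<and> T \<subseteq> regular_elems R}"
proof -
  define U where "U = \<Union>{T. left_den_set R T \<and> T \<subseteq> regular_elems R}"
  have M: "left_ore_set R (generated_submonoid R U) \<and> generated_submonoid R U \<subseteq> regular_elems R"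
    unfolding U_def using assms
    by (intro left_ore_set_generated_submonoid_Union) (auto simp: left_den_set_def)
  then have "generated_submonoid R U \<subseteq> U"
    using left_den_set_iff_left_ore_set unfolding U_def by blast
  then have "generated_submonoid R U = U"
    using generated_submonoid_superset[of U R] by blast
  then have "left_den_set R U"
    using M left_den_set_iff_left_ore_set by auto
  then show ?thesis
    unfolding S_l0_def U_def by (rule the_largest_eq_Union)
qed

lemma S_l0_subset_regular_elems: "\<one> \<noteq> \<zero> \<Longrightarrow> S_l0 R \<subseteq> regular_elems R"
  by (auto simp: S_l0_eq_Union)

lemma S_l0_eq_regular_elems:
  assumes "left_ore_set R (regular_elems R)"
  shows "S_l0 R = regular_elems R"
proof -
  have "\<one> \<noteq> \<zero>"
    using assms unfolding left_ore_set_def mult_closed_set_def by force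
  then show ?thesis
    using assms left_den_set_iff_left_ore_set[of "regular_elems R"] by (auto simp: S_l0_eq_Union)
qed

lemma S_r0_subset_regular_elems: "\<one> \<noteq> \<zero> \<Longrightarrow> S_r0 R \<subseteq> regular_elems R"
  using plain_ring.S_l0_subset_regular_elems[OF plain_ring_opposite]
  by (simp add: S_l0_opposite_ring)

lemma S_r0_eq_regular_elems: "right_ore_set R (regular_elems R) \<Longrightarrow> S_r0 R = regular_elems R"
  using plain_ring.S_l0_eq_regular_elems[OF plain_ring_opposite]
  by (simp add: S_l0_opposite_ring)

lemma left_right_den_set_Union:
  assumes "\<one> \<noteq> \<zero>"
  defines "U \<equiv> \<Union>{T. (left_den_set R T \<and> right_den_set R T) \<and> T \<subseteq> regular_elems R}"
  shows "left_den_set R U \<and> right_den_set R U"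
proof -
  have L: "left_ore_set R (generated_submonoid R U) \<and> generated_submonoid R U \<subseteq> regular_elems R"
    unfolding U_def using assms(1)
    by (intro left_ore_set_generated_submonoid_Union) (auto simp: left_den_set_def)
  have "left_ore_set (opposite_ring R) (generated_submonoid (opposite_ring R) U)"
    unfolding U_def using assms(1)
    by (intro plain_ring.left_ore_set_generated_submonoid_Union[THEN conjunct1]
        plain_ring_opposite) (auto simp: right_den_set_def)
  then have "right_ore_set R (generated_submonoid R U)" by simp
  then have den: "left_den_set R (generated_submonoid R U) \<and> right_den_set R (generated_submonoid R U)"
    using L left_den_set_iff_left_ore_set right_den_set_iff_right_ore_set by blast
  then have "generated_submonoid R U \<subseteq> U"
    using L unfolding U_def by blast
  then have "generated_submonoid R U = U"
    using generated_submonoid_superset[of U R] by blast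
  then show ?thesis
    using den by simp
qed

lemma S_0_eq_Union:
  assumes "\<one> \<noteq> \<zero>"
  shows "S_0 R = \<Union>{T. (left_den_set R T \<and> right_den_set R T) \<and> T \<subseteq> regular_elems R}"
proof -
  have "(THE S. (left_den_set R S \<and> right_den_set R S) \<and> S \<subseteq> regular_elems R \<and>
      (\<forall>T. (left_den_set R T \<and> right_den_set R T) \<and> T \<subseteq> regular_elems R \<longrightarrow> T \<subseteq> S)) =
      \<Union>{T. (left_den_set R T \<and> right_den_set R T) \<and> T \<subseteq> regular_elems R}"
    by (rule the_largest_eq_Union[where P = "\<lambda>S. left_den_set R S \<and> right_den_set R S"])
      (rule left_right_den_set_Union[OF assms])
  then show ?thesis
    by (simp add: S_0_def conj_assoc)
qed

lemma S_0_subset_regular_elems: "\<one> \<noteq> \<zero> \<Longrightarrow> S_0 R \<subseteq> regular_elems R"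
  by (auto simp: S_0_eq_Union)

lemma right_ore_set_S_0: "\<one> \<noteq> \<zero> \<Longrightarrow> right_ore_set R (S_0 R)"
  using left_right_den_set_Union by (simp add: S_0_eq_Union right_den_set_def)

lemma S_0_eq_regular_elems:
  assumes "left_ore_set R (regular_elems R)" and "right_ore_set R (regular_elems R)"
  shows "S_0 R = regular_elems R"
proof -
  have "\<one> \<noteq> \<zero>"
    using assms unfolding left_ore_set_def mult_closed_set_def by force
  then show ?thesis
    using assms left_den_set_iff_left_ore_set[of "regular_elems R"]
      right_den_set_iff_right_ore_set[of "regular_elems R"] by (auto simp: S_0_eq_Union)
qed

end

section \<open>Semisimple rings\<close>

context plain_ring
begin

lemma left_idealI:
  assumes "I \<subseteq> carrier R" "\<zero> \<in> I" "\<And>x y. x \<in> I \<Longrightarrow> y \<in> I \<Longrightarrow> x \<oplus> y \<in> I"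
    "\<And>x. x \<in> I \<Longrightarrow> \<ominus> x \<in> I" "\<And>a x. a \<in> carrier R \<Longrightarrow> x \<in> I \<Longrightarrow> a \<otimes> x \<in> I"
  shows "left_ideal R I"
  unfolding left_ideal_def
proof (intro conjI additive_subgroupI)
  show "subgroup I (add_monoid R)"
    by (rule group.subgroupI[OF a_group]) (use assms in \<open>auto simp: a_inv_def\<close>)
  show "\<forall>a\<in>carrier R. \<forall>x\<in>I. a \<otimes> x \<in> I"
    using assms(5) by blast
qed

lemma left_idealD:
  assumes "left_ideal R I"
  shows "I \<subseteq> carrier R" "\<And>a x. a \<in> carrier R \<Longrightarrow> x \<in> I \<Longrightarrow> a \<otimes> x \<in> I"
    "\<And>x y. x \<in> I \<Longrightarrow> y \<in> I \<Longrightarrow> x \<ominus> y \<in> I"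
proof -
  interpret additive_subgroup I R
    using assms by (simp add: left_ideal_def)
  show "I \<subseteq> carrier R" by (rule a_subset)
  show "\<And>x y. x \<in> I \<Longrightarrow> y \<in> I \<Longrightarrow> x \<ominus> y \<in> I"
    by (simp add: minus_eq a_closed a_inv_closed)
  show "\<And>a x. a \<in> carrier R \<Longrightarrow> x \<in> I \<Longrightarrow> a \<otimes> x \<in> I"
    using assms by (simp add: left_ideal_def)
qed

lemma left_ideal_principal: "c \<in> carrier R \<Longrightarrow> left_ideal R {q \<otimes> c | q. q \<in> carrier R}"
proof (rule left_idealI)
  assume c: "c \<in> carrier R"
  show "{q \<otimes> c | q. q \<in> carrier R} \<subseteq> carrier R" using c by blast
  show "\<zero> \<in> {q \<otimes> c | q. q \<in> carrier R}"
    using c l_null[symmetric] zero_closed by blast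
  show "x \<oplus> y \<in> {q \<otimes> c | q. q \<in> carrier R}"
    if "x \<in> {q \<otimes> c | q. q \<in> carrier R}" "y \<in> {q \<otimes> c | q. q \<in> carrier R}" for x y
    using that c l_distr[symmetric] add.m_closed by blast
  show "\<ominus> x \<in> {q \<otimes> c | q. q \<in> carrier R}" if "x \<in> {q \<otimes> c | q. q \<in> carrier R}" for x
    using that c l_minus[symmetric] a_inv_closed by blast
  show "a \<otimes> x \<in> {q \<otimes> c | q. q \<in> carrier R}"
    if "a \<in> carrier R" "x \<in> {q \<otimes> c | q. q \<in> carrier R}" for a x
    using that c m_assoc[symmetric] m_closed by blast
qed

lemma left_ideal_power_annihilators:
  assumes b: "b \<in> carrier R"
  shows "left_ideal R {x \<in> carrier R. \<exists>n::nat. x \<otimes> b [^] n = \<zero>}"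
proof (rule left_idealI)
  have kill: "x \<otimes> b [^] (n + k) = \<zero>" if "x \<in> carrier R" "x \<otimes> b [^] (n::nat) = \<zero>" for x n k
    using that b by (simp add: nat_pow_mult[symmetric] m_assoc[symmetric])
  show "x \<oplus> y \<in> {x \<in> carrier R. \<exists>n::nat. x \<otimes> b [^] n = \<zero>}"
    if x: "x \<in> {x \<in> carrier R. \<exists>n::nat. x \<otimes> b [^] n = \<zero>}"
      and y: "y \<in> {x \<in> carrier R. \<exists>n::nat. x \<otimes> b [^] n = \<zero>}" for x y
  proof -
    obtain n m :: nat where "x \<in> carrier R" "x \<otimes> b [^] n = \<zero>" "y \<in> carrier R" "y \<otimes> b [^] m = \<zero>"
      using x y by blast
    then have "(x \<oplus> y) \<otimes> b [^] (n + m) = \<zero>"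
      using kill[of x n m] kill[of y m n] b by (simp add: l_distr add.commute)
    then show ?thesis
      using \<open>x \<in> carrier R\<close> \<open>y \<in> carrier R\<close> by blast
  qed
  show "\<zero> \<in> {x \<in> carrier R. \<exists>n::nat. x \<otimes> b [^] n = \<zero>}"
    using b by auto
  show "\<ominus> x \<in> {x \<in> carrier R. \<exists>n::nat. x \<otimes> b [^] n = \<zero>}"
    if "x \<in> {x \<in> carrier R. \<exists>n::nat. x \<otimes> b [^] n = \<zero>}" for x
    using that b by (auto simp: l_minus)
  show "a \<otimes> x \<in> {x \<in> carrier R. \<exists>n::nat. x \<otimes> b [^] n = \<zero>}"
    if a: "a \<in> carrier R" and x: "x \<in> {x \<in> carrier R. \<exists>n::nat. x \<otimes> b [^] n = \<zero>}" for a x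
  proof -
    obtain n :: nat where "x \<in> carrier R" "x \<otimes> b [^] n = \<zero>"
      using x by blast
    then have "(a \<otimes> x) \<otimes> b [^] n = \<zero>"
      using a b by (simp add: m_assoc)
    then show ?thesis
      using a \<open>x \<in> carrier R\<close> by blast
  qed
qed auto

lemma semisimple_ringE:
  assumes "semisimple_ring R" and "left_ideal R I"
  obtains J x y where "left_ideal R J" "I \<inter> J = {\<zero>}" "x \<in> I" "y \<in> J" "\<one> = x \<oplus> y"
proof -
  obtain J where J: "left_ideal R J" "I \<inter> J = {\<zero>}" "{x \<oplus> y | x y. x \<in> I \<and> y \<in> J} = carrier R"
    using assms unfolding semisimple_ring_def by blast
  then have "\<one> \<in> {x \<oplus> y | x y. x \<in> I \<and> y \<in> J}" by simp
  then show ?thesis using that J by blast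
qed

text \<open>\<open>z \<otimes> y = z \<ominus> z \<otimes> x\<close> lies in both \<open>I\<close> and \<open>J\<close>.\<close>

lemma mult_complement_component:
  assumes I: "left_ideal R I" and J: "left_ideal R J" and IJ: "I \<inter> J = {\<zero>}"
    and x: "x \<in> I" and y: "y \<in> J" and one: "\<one> = x \<oplus> y" and z: "z \<in> I"
  shows "z \<otimes> y = \<zero>" "z \<otimes> x = z"
proof -
  have carr: "x \<in> carrier R" "y \<in> carrier R" "z \<in> carrier R"
    using x y z left_idealD(1)[OF I] left_idealD(1)[OF J] by auto
  have split: "z = z \<otimes> x \<oplus> z \<otimes> y"
    using carr by (simp add: r_distr[symmetric] one[symmetric])
  have "z \<otimes> y = (z \<otimes> x \<oplus> z \<otimes> y) \<ominus> z \<otimes> x"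
    using carr by algebra
  then have "z \<otimes> y = z \<ominus> z \<otimes> x"
    using split by simp
  then have "z \<otimes> y \<in> I"
    using left_idealD(2,3)[OF I] carr z x by simp
  moreover have "z \<otimes> y \<in> J"
    using left_idealD(2)[OF J] carr y by simp
  ultimately show "z \<otimes> y = \<zero>"
    using IJ by blast
  then show "z \<otimes> x = z"
    using split carr by simp
qed

lemma pow_mult_pow_eq_one:
  assumes "a \<in> carrier R" "b \<in> carrier R" "a \<otimes> b = \<one>"
  shows "a [^] (n::nat) \<otimes> b [^] n = \<one>"
proof (induction n)
  case (Suc n)
  have "b [^] Suc n = b \<otimes> b [^] n"
    using assms(2) by (rule nat_pow_Suc2)
  then have "a [^] Suc n \<otimes> b [^] Suc n = a [^] n \<otimes> (a \<otimes> b) \<otimes> b [^] n"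
    using assms(1,2) by (simp add: m_assoc del: nat_pow_Suc)
  then show ?case
    using assms Suc by simp
qed simp

text \<open>The left ideal of elements killed by some power of \<open>b\<close> has a complement; right
  multiplication by its component \<open>x\<close> of \<open>\<one>\<close> fixes \<open>(\<one> \<ominus> b \<otimes> a) \<otimes> a [^] n\<close>, and since
  \<open>x \<otimes> b [^] n = \<zero>\<close> this forces \<open>\<one> \<ominus> b \<otimes> a = \<zero>\<close>.\<close>

lemma semisimple_ring_mult_eq_one_commute:
  assumes ss: "semisimple_ring R" and a: "a \<in> carrier R" and b: "b \<in> carrier R"
    and ab: "a \<otimes> b = \<one>"
  shows "b \<otimes> a = \<one>"
proof -
  define f where "f = \<one> \<ominus> b \<otimes> a"
  define I where "I = {x \<in> carrier R. \<exists>n::nat. x \<otimes> b [^] n = \<zero>}"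
  have f: "f \<in> carrier R" using a b by (simp add: f_def)
  have "f \<otimes> b = b \<ominus> b \<otimes> (a \<otimes> b)"
    using a b unfolding f_def by algebra
  then have fb: "f \<otimes> b = \<zero>"
    using ab b by simp
  have I: "left_ideal R I"
    unfolding I_def by (rule left_ideal_power_annihilators[OF b])
  obtain J x y where J: "left_ideal R J" "I \<inter> J = {\<zero>}" "x \<in> I" "y \<in> J" "\<one> = x \<oplus> y"
    using semisimple_ringE[OF ss I] by blast
  obtain n :: nat where x: "x \<in> carrier R" "x \<otimes> b [^] n = \<zero>"
    using J(3) unfolding I_def by blast
  define z where "z = f \<otimes> a [^] n"
  have z: "z \<in> carrier R" using f a by (simp add: z_def)
  have "z \<otimes> b [^] Suc n = f \<otimes> (a [^] n \<otimes> b [^] n) \<otimes> b"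
    using f a b by (simp add: z_def m_assoc)
  then have "z \<otimes> b [^] Suc n = \<zero>"
    using pow_mult_pow_eq_one[OF a b ab] f fb by simp
  then have "z \<otimes> x = z"
    using mult_complement_component(2)[OF I J] z unfolding I_def by blast
  have "f = z \<otimes> b [^] n"
    using pow_mult_pow_eq_one[OF a b ab] f a b by (simp add: z_def m_assoc)
  also have "\<dots> = z \<otimes> (x \<otimes> b [^] n)"
    using \<open>z \<otimes> x = z\<close> z x b by (metis m_assoc nat_pow_closed)
  finally have "\<one> \<ominus> b \<otimes> a = \<zero>"
    using x z by (simp add: f_def)
  then show ?thesis
    using a b r_right_minus_eq[of \<one> "b \<otimes> a"] by simp
qed

lemma semisimple_ring_von_Neumann_regular:
  assumes ss: "semisimple_ring R" and c: "c \<in> carrier R"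
  obtains d where "d \<in> carrier R" "c \<otimes> d \<otimes> c = c"
proof -
  define K where "K = {q \<otimes> c | q. q \<in> carrier R}"
  have K: "left_ideal R K"
    unfolding K_def by (rule left_ideal_principal[OF c])
  obtain J x y where J: "left_ideal R J" "K \<inter> J = {\<zero>}" "x \<in> K" "y \<in> J" "\<one> = x \<oplus> y"
    using semisimple_ringE[OF ss K] by blast
  obtain d where d: "d \<in> carrier R" "x = d \<otimes> c"
    using J(3) unfolding K_def by blast
  have "c \<in> K"
    using c l_one[symmetric] one_closed unfolding K_def by blast
  then have "c \<otimes> x = c"
    by (rule mult_complement_component(2)[OF K J])
  then have "c \<otimes> d \<otimes> c = c"
    using d c by (simp add: m_assoc)
  then show ?thesis
    using that d(1) by blast
qed

lemma semisimple_ring_Units_if_regular: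
  assumes ss: "semisimple_ring R" and c: "c \<in> carrier R"
    and reg: "(\<forall>x \<in> carrier R. x \<otimes> c = \<zero> \<longrightarrow> x = \<zero>) \<or> (\<forall>x \<in> carrier R. c \<otimes> x = \<zero> \<longrightarrow> x = \<zero>)"
  shows "c \<in> Units R"
proof -
  obtain d where d: "d \<in> carrier R" "c \<otimes> d \<otimes> c = c"
    using semisimple_ring_von_Neumann_regular[OF ss c] by blast
  have "(c \<otimes> d \<ominus> \<one>) \<otimes> c = c \<otimes> d \<otimes> c \<ominus> c" "c \<otimes> (d \<otimes> c \<ominus> \<one>) = c \<otimes> d \<otimes> c \<ominus> c"
    using c d(1) by (simp_all add: minus_eq l_distr r_distr l_minus r_minus m_assoc)
  then have "(c \<otimes> d \<ominus> \<one>) \<otimes> c = \<zero>" "c \<otimes> (d \<otimes> c \<ominus> \<one>) = \<zero>"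
    using c d by simp_all
  moreover have "c \<otimes> d \<ominus> \<one> \<in> carrier R" "d \<otimes> c \<ominus> \<one> \<in> carrier R"
    using c d(1) by simp_all
  ultimately have "c \<otimes> d \<ominus> \<one> = \<zero> \<or> d \<otimes> c \<ominus> \<one> = \<zero>"
    using reg by blast
  then have "c \<otimes> d = \<one> \<or> d \<otimes> c = \<one>"
    using c d(1) by simp
  then have "c \<otimes> d = \<one> \<and> d \<otimes> c = \<one>"
    using semisimple_ring_mult_eq_one_commute[OF ss c d(1)] semisimple_ring_mult_eq_one_commute[OF ss d(1) c]
    by blast
  then show ?thesis
    using c d(1) unfolding Units_def by blast
qed

end

section \<open>Rings of fractions\<close>

abbreviation left_fraction :: "'b ring \<Rightarrow> ('a \<Rightarrow> 'b) \<Rightarrow> 'a \<Rightarrow> 'a \<Rightarrow> 'b" where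
  "left_fraction Q \<phi> s r \<equiv> inv\<^bsub>Q\<^esub> (\<phi> s) \<otimes>\<^bsub>Q\<^esub> \<phi> r"

context plain_ring
begin

lemma eq_Units_inv_mult_iff:
  assumes "u \<in> Units R" "v \<in> carrier R" "q \<in> carrier R"
  shows "q = inv u \<otimes> v \<longleftrightarrow> u \<otimes> q = v"
proof -
  have "u \<in> carrier R" "inv u \<in> carrier R"
    using assms(1) by auto
  then show ?thesis
    using assms by (auto simp: m_assoc[symmetric] Units_r_inv Units_l_inv)
qed

lemma ex_regular_annihilator_iff:
  assumes "S \<subseteq> regular_elems R" "\<one> \<in> S" "r \<in> carrier R"
  shows "(\<exists>s \<in> S. s \<otimes> r = \<zero>) \<longleftrightarrow> r = \<zero>" "(\<exists>s \<in> S. r \<otimes> s = \<zero>) \<longleftrightarrow> r = \<zero>"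
proof -
  have "\<one> \<otimes> \<zero> = \<zero>" "\<zero> \<otimes> \<one> = \<zero>" by simp_all
  then show "(\<exists>s \<in> S. s \<otimes> r = \<zero>) \<longleftrightarrow> r = \<zero>" "(\<exists>s \<in> S. r \<otimes> s = \<zero>) \<longleftrightarrow> r = \<zero>"
    using assms regular_elemsD(2,3) by blast+
qed

lemma left_ring_of_fractionsD:
  assumes "left_ring_of_fractions R S Q \<phi>"
  shows "ring Q" "\<phi> \<in> ring_hom R Q" "\<And>s. s \<in> S \<Longrightarrow> \<phi> s \<in> Units Q"
    "\<And>q. q \<in> carrier Q \<Longrightarrow> \<exists>s \<in> S. \<exists>r \<in> carrier R. q = left_fraction Q \<phi> s r"
    "\<And>r. r \<in> carrier R \<Longrightarrow> \<phi> r = \<zero>\<^bsub>Q\<^esub> \<longleftrightarrow> (\<exists>s \<in> S. s \<otimes> r = \<zero>)"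
  using assms unfolding left_ring_of_fractions_def by blast+

lemma left_ring_of_fractions_eqD:
  assumes L: "left_ring_of_fractions R S Q \<phi>" and S: "S \<subseteq> carrier R"
    and u: "u \<in> carrier R" and v: "v \<in> carrier R" and eq: "\<phi> u = \<phi> v"
  shows "\<exists>s \<in> S. s \<otimes> u = s \<otimes> v"
proof -
  note D = left_ring_of_fractionsD[OF L]
  interpret hom: ring_hom_ring R Q \<phi>
    by (rule ring_hom_ringI2[OF ring_axioms D(1,2)])
  have "\<phi> (u \<ominus> v) = \<phi> u \<ominus>\<^bsub>Q\<^esub> \<phi> v"
    using u v by (simp add: minus_eq hom.S.minus_eq hom.hom_add hom.hom_a_inv)
  then have "\<phi> (u \<ominus> v) = \<zero>\<^bsub>Q\<^esub>"
    using u v eq by simp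
  then obtain s where s: "s \<in> S" "s \<otimes> (u \<ominus> v) = \<zero>"
    using D(5) u v by blast
  moreover have "s \<in> carrier R"
    using s(1) S by blast
  moreover have "s \<otimes> (u \<ominus> v) = s \<otimes> u \<ominus> s \<otimes> v"
    using \<open>s \<in> carrier R\<close> u v by algebra
  ultimately show ?thesis
    using u v by auto
qed

lemma eq_mult_Units_inv_iff:
  assumes "u \<in> Units R" "v \<in> carrier R" "q \<in> carrier R"
  shows "q = v \<otimes> inv u \<longleftrightarrow> q \<otimes> u = v"
  using plain_ring.eq_Units_inv_mult_iff[OF plain_ring_opposite] assms by simp

lemma left_ring_of_fractions_regular_cancel:
  assumes L: "left_ring_of_fractions R S Q \<phi>" and S: "S \<subseteq> regular_elems R"
    and c: "c \<in> regular_elems R" and x: "x \<in> carrier Q" and xc: "x \<otimes>\<^bsub>Q\<^esub> \<phi> c = \<zero>\<^bsub>Q\<^esub>"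
  shows "x = \<zero>\<^bsub>Q\<^esub>"
proof -
  note D = left_ring_of_fractionsD[OF L]
  interpret Q: plain_ring Q by (simp add: plain_ring_iff_ring D(1))
  interpret hom: ring_hom_ring R Q \<phi>
    by (rule ring_hom_ringI2[OF ring_axioms D(1,2)])
  obtain s r where s: "s \<in> S" and r: "r \<in> carrier R" and x_eq: "x = left_fraction Q \<phi> s r"
    using D(4)[OF x] by blast
  have Us: "\<phi> s \<in> Units Q" by (rule D(3)[OF s])
  then have sQ: "\<phi> s \<in> carrier Q" "inv\<^bsub>Q\<^esub> (\<phi> s) \<in> carrier Q" by auto
  have cR: "c \<in> carrier R" by (rule regular_elemsD(1)[OF c])
  have "\<phi> s \<otimes>\<^bsub>Q\<^esub> x = \<phi> r"
    using Q.eq_Units_inv_mult_iff[OF Us ring_hom_closed[OF D(2) r] x] x_eq by simp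
  then have "\<phi> (r \<otimes> c) = (\<phi> s \<otimes>\<^bsub>Q\<^esub> x) \<otimes>\<^bsub>Q\<^esub> \<phi> c"
    using r cR by simp
  also have "\<dots> = \<phi> s \<otimes>\<^bsub>Q\<^esub> (x \<otimes>\<^bsub>Q\<^esub> \<phi> c)"
    using Q.Units_closed[OF Us] x ring_hom_closed[OF D(2) cR] by (simp add: Q.m_assoc)
  finally have "\<phi> (r \<otimes> c) = \<zero>\<^bsub>Q\<^esub>"
    using sQ xc by simp
  then obtain s' where s': "s' \<in> S" "s' \<otimes> (r \<otimes> c) = \<zero>"
    using D(5) r cR by blast
  have s'R: "s' \<in> carrier R" using s'(1) S regular_elemsD(1) by blast
  have "(s' \<otimes> r) \<otimes> c = \<zero>"
    using s'(2) s'R r cR by (simp add: m_assoc)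
  then have "s' \<otimes> r = \<zero>"
    using regular_elemsD(3)[OF c] s'R r by simp
  then have "r = \<zero>"
    using regular_elemsD(2) s'(1) S r by blast
  then show ?thesis
    using x_eq sQ by simp
qed

lemma right_ring_of_fractions_regular_cancel:
  assumes "right_ring_of_fractions R S Q \<phi>" and "S \<subseteq> regular_elems R"
    and "c \<in> regular_elems R" and "x \<in> carrier Q" and "\<phi> c \<otimes>\<^bsub>Q\<^esub> x = \<zero>\<^bsub>Q\<^esub>"
  shows "x = \<zero>\<^bsub>Q\<^esub>"
  using plain_ring.left_ring_of_fractions_regular_cancel[OF plain_ring_opposite,
      of S "opposite_ring Q" \<phi> c x] assms by simp

text \<open>Write \<open>\<phi> r \<otimes> (\<phi> c)\<inverse>\<close> as a left fraction \<open>(\<phi> s)\<inverse> \<otimes> \<phi> a\<close> and clear denominators.\<close>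

lemma left_ore_set_regular_elems_if_Units:
  assumes L: "left_ring_of_fractions R S Q \<phi>" and S: "S \<subseteq> regular_elems R"
    and U: "\<And>c. c \<in> regular_elems R \<Longrightarrow> \<phi> c \<in> Units Q" and nz: "\<one> \<noteq> \<zero>"
  shows "left_ore_set R (regular_elems R)"
  unfolding left_ore_set_def
proof (intro conjI ballI)
  show "mult_closed_set R (regular_elems R)"
    using mult_closed_set_iff_submonoid[OF subset_refl nz] submonoid_regular_elems by blast
  fix r c assume r: "r \<in> carrier R" and c: "c \<in> regular_elems R"
  note D = left_ring_of_fractionsD[OF L]
  interpret Q: plain_ring Q by (simp add: plain_ring_iff_ring D(1))
  have cR: "c \<in> carrier R" by (rule regular_elemsD(1)[OF c])
  have Uc: "\<phi> c \<in> Units Q" by (rule U[OF c])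
  then have cQ: "\<phi> c \<in> carrier Q" "inv\<^bsub>Q\<^esub> (\<phi> c) \<in> carrier Q" by auto
  define q where "q = \<phi> r \<otimes>\<^bsub>Q\<^esub> inv\<^bsub>Q\<^esub> (\<phi> c)"
  have q: "q \<in> carrier Q"
    unfolding q_def using cQ ring_hom_closed[OF D(2) r] by simp
  have qc: "q \<otimes>\<^bsub>Q\<^esub> \<phi> c = \<phi> r"
    unfolding q_def using Uc cQ ring_hom_closed[OF D(2) r] by (simp add: Q.m_assoc)
  obtain s a where s: "s \<in> S" and a: "a \<in> carrier R" and q_eq: "q = left_fraction Q \<phi> s a"
    using D(4)[OF q] by blast
  have sR: "s \<in> carrier R" using s S regular_elemsD(1) by blast
  have Us: "\<phi> s \<in> Units Q" by (rule D(3)[OF s])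
  have sq: "\<phi> s \<otimes>\<^bsub>Q\<^esub> q = \<phi> a"
    using Q.eq_Units_inv_mult_iff[OF Us ring_hom_closed[OF D(2) a] q] q_eq by simp
  have "\<phi> (s \<otimes> r) = \<phi> s \<otimes>\<^bsub>Q\<^esub> (q \<otimes>\<^bsub>Q\<^esub> \<phi> c)"
    using sR r qc by (simp add: ring_hom_mult[OF D(2)])
  also have "\<dots> = (\<phi> s \<otimes>\<^bsub>Q\<^esub> q) \<otimes>\<^bsub>Q\<^esub> \<phi> c"
    using Q.Units_closed[OF Us] cQ q by (simp add: Q.m_assoc)
  also have "\<dots> = \<phi> (a \<otimes> c)"
    using sq a cR by (simp add: ring_hom_mult[OF D(2)])
  finally have "\<phi> (s \<otimes> r) = \<phi> (a \<otimes> c)" .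
  moreover have "S \<subseteq> carrier R"
    using S regular_elemsD(1) by blast
  ultimately obtain s' where s': "s' \<in> S" "s' \<otimes> (s \<otimes> r) = s' \<otimes> (a \<otimes> c)"
    using left_ring_of_fractions_eqD[OF L, of "s \<otimes> r" "a \<otimes> c"] sR r a cR by auto
  have s'R: "s' \<in> carrier R" using s'(1) S regular_elemsD(1) by blast
  have "(s' \<otimes> s) \<otimes> r = (s' \<otimes> a) \<otimes> c"
    using s'(2) s'R sR r a cR by (simp add: m_assoc)
  moreover have "s' \<otimes> s \<in> regular_elems R"
    using s s'(1) S submonoid.m_closed[OF submonoid_regular_elems] by blast
  ultimately show "\<exists>t \<in> regular_elems R. \<exists>a \<in> carrier R. t \<otimes> r = a \<otimes> c"
    using s'R a by blast
qed

lemma right_ore_set_regular_elems_if_Units: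
  assumes "right_ring_of_fractions R S Q \<phi>" and "S \<subseteq> regular_elems R"
    and "\<And>c. c \<in> regular_elems R \<Longrightarrow> \<phi> c \<in> Units Q" and "\<one> \<noteq> \<zero>"
  shows "right_ore_set R (regular_elems R)"
  using plain_ring.left_ore_set_regular_elems_if_Units[OF plain_ring_opposite,
      of S "opposite_ring Q" \<phi>] assms by simp

lemma left_ore_set_regular_elems_if_semisimple:
  assumes L: "left_ring_of_fractions R S Q \<phi>" and S: "S \<subseteq> regular_elems R"
    and ss: "semisimple_ring Q" and nz: "\<one> \<noteq> \<zero>"
  shows "left_ore_set R (regular_elems R)"
proof (rule left_ore_set_regular_elems_if_Units[OF L S _ nz])
  fix c assume c: "c \<in> regular_elems R"
  note D = left_ring_of_fractionsD[OF L]
  show "\<phi> c \<in> Units Q"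
  proof (rule plain_ring.semisimple_ring_Units_if_regular[OF _ ss])
    show "plain_ring Q" by (simp add: plain_ring_iff_ring D(1))
    show "\<phi> c \<in> carrier Q" by (rule ring_hom_closed[OF D(2) regular_elemsD(1)[OF c]])
    show "(\<forall>x \<in> carrier Q. x \<otimes>\<^bsub>Q\<^esub> \<phi> c = \<zero>\<^bsub>Q\<^esub> \<longrightarrow> x = \<zero>\<^bsub>Q\<^esub>) \<or>
        (\<forall>x \<in> carrier Q. \<phi> c \<otimes>\<^bsub>Q\<^esub> x = \<zero>\<^bsub>Q\<^esub> \<longrightarrow> x = \<zero>\<^bsub>Q\<^esub>)"
      using left_ring_of_fractions_regular_cancel[OF L S c] by blast
  qed
qed

lemma right_ore_set_regular_elems_if_semisimple:
  assumes R: "right_ring_of_fractions R S Q \<phi>" and S: "S \<subseteq> regular_elems R"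
    and ss: "semisimple_ring Q" and nz: "\<one> \<noteq> \<zero>"
  shows "right_ore_set R (regular_elems R)"
proof (rule right_ore_set_regular_elems_if_Units[OF R S _ nz])
  fix c assume c: "c \<in> regular_elems R"
  have Q: "ring Q" and hom: "\<phi> \<in> ring_hom R Q"
    using R by (simp_all add: right_ring_of_fractions_def)
  show "\<phi> c \<in> Units Q"
  proof (rule plain_ring.semisimple_ring_Units_if_regular[OF _ ss])
    show "plain_ring Q" by (simp add: plain_ring_iff_ring Q)
    show "\<phi> c \<in> carrier Q" by (rule ring_hom_closed[OF hom regular_elemsD(1)[OF c]])
    show "(\<forall>x \<in> carrier Q. x \<otimes>\<^bsub>Q\<^esub> \<phi> c = \<zero>\<^bsub>Q\<^esub> \<longrightarrow> x = \<zero>\<^bsub>Q\<^esub>) \<or>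
        (\<forall>x \<in> carrier Q. \<phi> c \<otimes>\<^bsub>Q\<^esub> x = \<zero>\<^bsub>Q\<^esub> \<longrightarrow> x = \<zero>\<^bsub>Q\<^esub>)"
      using right_ring_of_fractions_regular_cancel[OF R S c] by blast
  qed
qed

lemma right_ring_of_fractions_if_left:
  assumes L: "left_ring_of_fractions R S Q \<phi>" and S: "S \<subseteq> regular_elems R"
    and RO: "right_ore_set R S"
  shows "right_ring_of_fractions R S Q \<phi>"
proof -
  note D = left_ring_of_fractionsD[OF L]
  interpret Q: plain_ring Q by (simp add: plain_ring_iff_ring D(1))
  have SR: "S \<subseteq> carrier R" using S regular_elemsD(1) by blast
  have "\<exists>t \<in> S. \<exists>a \<in> carrier R. q = \<phi> a \<otimes>\<^bsub>Q\<^esub> inv\<^bsub>Q\<^esub> (\<phi> t)" if q: "q \<in> carrier Q" for q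
  proof -
    obtain s r where s: "s \<in> S" and r: "r \<in> carrier R" and q_eq: "q = left_fraction Q \<phi> s r"
      using D(4)[OF q] by blast
    obtain t a where t: "t \<in> S" and a: "a \<in> carrier R" and ore: "r \<otimes> t = s \<otimes> a"
      using RO r s unfolding right_ore_set_def by blast
    have Us: "\<phi> s \<in> Units Q" and Ut: "\<phi> t \<in> Units Q"
      using D(3) s t by auto
    have sQ: "\<phi> s \<in> carrier Q" and tQ: "\<phi> t \<in> carrier Q"
      using Us Ut by auto
    have sq: "\<phi> s \<otimes>\<^bsub>Q\<^esub> q = \<phi> r"
      using Q.eq_Units_inv_mult_iff[OF Us ring_hom_closed[OF D(2) r] q] q_eq by simp
    have "\<phi> s \<otimes>\<^bsub>Q\<^esub> (q \<otimes>\<^bsub>Q\<^esub> \<phi> t) = \<phi> (r \<otimes> t)"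
      using sq sQ tQ q r t SR by (simp add: Q.m_assoc[symmetric] ring_hom_mult[OF D(2)] subsetD)
    also have "\<dots> = \<phi> s \<otimes>\<^bsub>Q\<^esub> \<phi> a"
      using ore s a SR by (simp add: ring_hom_mult[OF D(2)] subsetD)
    finally have "q \<otimes>\<^bsub>Q\<^esub> \<phi> t = \<phi> a"
      using Q.Units_l_cancel[OF Us] q tQ ring_hom_closed[OF D(2) a] by simp
    then show ?thesis
      using Q.eq_mult_Units_inv_iff[OF Ut ring_hom_closed[OF D(2) a] q] t a by blast
  qed
  moreover have "\<phi> r = \<zero>\<^bsub>Q\<^esub> \<longleftrightarrow> (\<exists>s \<in> S. r \<otimes> s = \<zero>)" if r: "r \<in> carrier R" for r
  proof -
    have "\<one> \<in> S"
      using RO by (simp add: right_ore_set_def mult_closed_set_def)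
    then show ?thesis
      using D(5)[OF r] ex_regular_annihilator_iff[OF S _ r] by simp
  qed
  ultimately show ?thesis
    using D(1,2,3) unfolding right_ring_of_fractions_def by blast
qed

lemma left_ring_of_fractions_if_right:
  assumes "right_ring_of_fractions R S Q \<phi>" and "S \<subseteq> regular_elems R"
    and "left_ore_set R S"
  shows "left_ring_of_fractions R S Q \<phi>"
  using plain_ring.right_ring_of_fractions_if_left[OF plain_ring_opposite,
      of S "opposite_ring Q" \<phi>] assms by simp

lemma Ore_regular_elems_if_semisimple_S_0:
  assumes nz: "\<one> \<noteq> \<zero>" and L: "left_ring_of_fractions R (S_0 R) Q \<phi>" and ss: "semisimple_ring Q"
  shows "left_ore_set R (regular_elems R) \<and> right_ore_set R (regular_elems R)"
proof -
  have S: "S_0 R \<subseteq> regular_elems R" by (rule S_0_subset_regular_elems[OF nz])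
  have "right_ring_of_fractions R (S_0 R) Q \<phi>"
    by (rule right_ring_of_fractions_if_left[OF L S right_ore_set_S_0[OF nz]])
  then show ?thesis
    using left_ore_set_regular_elems_if_semisimple[OF L S ss nz]
      right_ore_set_regular_elems_if_semisimple[OF _ S ss nz] by blast
qed

section \<open>Uniqueness of left rings of fractions\<close>

lemma left_fraction_cancel:
  assumes L: "left_ring_of_fractions R S Q \<phi>" and SR: "S \<subseteq> carrier R" and s: "s \<in> S"
    and x: "x \<in> carrier R" and r: "r \<in> carrier R"
  shows "\<phi> (x \<otimes> s) \<otimes>\<^bsub>Q\<^esub> left_fraction Q \<phi> s r = \<phi> (x \<otimes> r)"
proof -
  note D = left_ring_of_fractionsD[OF L]
  interpret Q: plain_ring Q by (simp add: plain_ring_iff_ring D(1))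
  have Us: "\<phi> s \<in> Units Q" by (rule D(3)[OF s])
  have sR: "s \<in> carrier R" using s SR by blast
  have frac: "left_fraction Q \<phi> s r \<in> carrier Q"
    using Us r by (simp add: ring_hom_closed[OF D(2)])
  have "\<phi> s \<otimes>\<^bsub>Q\<^esub> left_fraction Q \<phi> s r = \<phi> r"
    using Q.eq_Units_inv_mult_iff[OF Us ring_hom_closed[OF D(2) r] frac] by simp
  then show ?thesis
    using x sR r frac by (simp add: ring_hom_mult[OF D(2)] ring_hom_closed[OF D(2)] Q.m_assoc)
qed

text \<open>Equality of left fractions is decided inside \<open>R\<close>: this is what makes the comparison map
  between two left rings of fractions well defined.\<close>

lemma left_fraction_eq_iff:
  assumes L: "left_ring_of_fractions R S Q \<phi>" and LO: "left_ore_set R S"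
    and s: "s \<in> S" and s': "s' \<in> S" and r: "r \<in> carrier R" and r': "r' \<in> carrier R"
  shows "left_fraction Q \<phi> s r = left_fraction Q \<phi> s' r' \<longleftrightarrow>
    (\<exists>t \<in> carrier R. \<exists>a \<in> carrier R. t \<otimes> s \<in> S \<and> t \<otimes> s = a \<otimes> s' \<and> t \<otimes> r = a \<otimes> r')"
proof -
  note D = left_ring_of_fractionsD[OF L]
  interpret Q: plain_ring Q by (simp add: plain_ring_iff_ring D(1))
  have SR: "S \<subseteq> carrier R" and mult: "\<And>x y. x \<in> S \<Longrightarrow> y \<in> S \<Longrightarrow> x \<otimes> y \<in> S"
    using LO by (auto simp: left_ore_set_def mult_closed_set_def)
  have frac: "left_fraction Q \<phi> s r \<in> carrier Q" "left_fraction Q \<phi> s' r' \<in> carrier Q"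
    using D(3) s s' r r' by (auto simp: ring_hom_closed[OF D(2)])
  have common: "left_fraction Q \<phi> s r = left_fraction Q \<phi> s' r' \<longleftrightarrow> \<phi> (t \<otimes> r) = \<phi> (a \<otimes> r')"
    if t: "t \<in> carrier R" "t \<otimes> s \<in> S" and a: "a \<in> carrier R" and eq: "t \<otimes> s = a \<otimes> s'" for t a
  proof -
    have "\<phi> (t \<otimes> s) \<otimes>\<^bsub>Q\<^esub> left_fraction Q \<phi> s r = \<phi> (t \<otimes> r)"
      using left_fraction_cancel[OF L SR s] t r by blast
    moreover have "\<phi> (t \<otimes> s) \<otimes>\<^bsub>Q\<^esub> left_fraction Q \<phi> s' r' = \<phi> (a \<otimes> r')"
      using left_fraction_cancel[OF L SR s'] eq a r' by auto
    ultimately show ?thesis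
      using Q.Units_l_cancel[OF D(3)[OF t(2)] frac] by simp
  qed
  show ?thesis
  proof
    assume eq: "left_fraction Q \<phi> s r = left_fraction Q \<phi> s' r'"
    obtain t0 a0 where t0: "t0 \<in> S" and a0: "a0 \<in> carrier R" and ore: "t0 \<otimes> s = a0 \<otimes> s'"
      using LO s s' SR unfolding left_ore_set_def by blast
    have t0R: "t0 \<in> carrier R" using t0 SR by blast
    have "\<phi> (t0 \<otimes> r) = \<phi> (a0 \<otimes> r')"
      using common[OF t0R mult[OF t0 s] a0 ore] eq by blast
    then obtain u where u: "u \<in> S" "u \<otimes> (t0 \<otimes> r) = u \<otimes> (a0 \<otimes> r')"
      using left_ring_of_fractions_eqD[OF L SR, of "t0 \<otimes> r" "a0 \<otimes> r'"] t0R a0 r r' by auto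
    have uR: "u \<in> carrier R" using u(1) SR by blast
    have "(u \<otimes> t0) \<otimes> s \<in> S" "(u \<otimes> t0) \<otimes> s = (u \<otimes> a0) \<otimes> s'" "(u \<otimes> t0) \<otimes> r = (u \<otimes> a0) \<otimes> r'"
      using mult[OF u(1) mult[OF t0 s]] ore u(2) uR t0R a0 s s' r r' SR by (auto simp: m_assoc subsetD)
    then show "\<exists>t \<in> carrier R. \<exists>a \<in> carrier R. t \<otimes> s \<in> S \<and> t \<otimes> s = a \<otimes> s' \<and> t \<otimes> r = a \<otimes> r'"
      using uR t0R a0 by blast
  next
    assume "\<exists>t \<in> carrier R. \<exists>a \<in> carrier R. t \<otimes> s \<in> S \<and> t \<otimes> s = a \<otimes> s' \<and> t \<otimes> r = a \<otimes> r'"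
    then show "left_fraction Q \<phi> s r = left_fraction Q \<phi> s' r'"
      using common by metis
  qed
qed

lemma left_fraction_add:
  assumes L: "left_ring_of_fractions R S Q \<phi>" and LO: "left_ore_set R S"
    and s1: "s1 \<in> S" and s2: "s2 \<in> S" and r1: "r1 \<in> carrier R" and r2: "r2 \<in> carrier R"
    and t: "t \<in> S" and a: "a \<in> carrier R" and eq: "t \<otimes> s1 = a \<otimes> s2"
  shows "left_fraction Q \<phi> s1 r1 \<oplus>\<^bsub>Q\<^esub> left_fraction Q \<phi> s2 r2
    = left_fraction Q \<phi> (t \<otimes> s1) (t \<otimes> r1 \<oplus> a \<otimes> r2)"
proof -
  note D = left_ring_of_fractionsD[OF L]
  interpret Q: plain_ring Q by (simp add: plain_ring_iff_ring D(1))
  have SR: "S \<subseteq> carrier R" and ts1: "t \<otimes> s1 \<in> S"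
    using LO t s1 by (auto simp: left_ore_set_def mult_closed_set_def)
  have tR: "t \<in> carrier R" using t SR by blast
  have frac: "left_fraction Q \<phi> s1 r1 \<in> carrier Q" "left_fraction Q \<phi> s2 r2 \<in> carrier Q"
    using D(3) s1 s2 r1 r2 by (auto simp: ring_hom_closed[OF D(2)])
  have wQ: "\<phi> (t \<otimes> s1) \<in> carrier Q"
    using ts1 D(3) by blast
  have "\<phi> (t \<otimes> s1) \<otimes>\<^bsub>Q\<^esub> (left_fraction Q \<phi> s1 r1 \<oplus>\<^bsub>Q\<^esub> left_fraction Q \<phi> s2 r2)
      = \<phi> (t \<otimes> s1) \<otimes>\<^bsub>Q\<^esub> left_fraction Q \<phi> s1 r1 \<oplus>\<^bsub>Q\<^esub> \<phi> (t \<otimes> s1) \<otimes>\<^bsub>Q\<^esub> left_fraction Q \<phi> s2 r2"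
    using frac wQ by (simp add: Q.r_distr)
  also have "\<dots> = \<phi> (t \<otimes> s1) \<otimes>\<^bsub>Q\<^esub> left_fraction Q \<phi> s1 r1 \<oplus>\<^bsub>Q\<^esub> \<phi> (a \<otimes> s2) \<otimes>\<^bsub>Q\<^esub> left_fraction Q \<phi> s2 r2"
    by (simp only: eq)
  also have "\<dots> = \<phi> (t \<otimes> r1 \<oplus> a \<otimes> r2)"
    using left_fraction_cancel[OF L SR] s1 s2 tR a r1 r2 by (simp add: ring_hom_add[OF D(2)])
  finally show ?thesis
    using Q.eq_Units_inv_mult_iff[OF D(3)[OF ts1]] frac tR a r1 r2
    by (simp add: ring_hom_closed[OF D(2)])
qed

lemma left_fraction_mult:
  assumes L: "left_ring_of_fractions R S Q \<phi>" and LO: "left_ore_set R S"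
    and s1: "s1 \<in> S" and s2: "s2 \<in> S" and r1: "r1 \<in> carrier R" and r2: "r2 \<in> carrier R"
    and t: "t \<in> S" and a: "a \<in> carrier R" and eq: "t \<otimes> r1 = a \<otimes> s2"
  shows "left_fraction Q \<phi> s1 r1 \<otimes>\<^bsub>Q\<^esub> left_fraction Q \<phi> s2 r2 = left_fraction Q \<phi> (t \<otimes> s1) (a \<otimes> r2)"
proof -
  note D = left_ring_of_fractionsD[OF L]
  interpret Q: plain_ring Q by (simp add: plain_ring_iff_ring D(1))
  have SR: "S \<subseteq> carrier R" and ts1: "t \<otimes> s1 \<in> S"
    using LO t s1 by (auto simp: left_ore_set_def mult_closed_set_def)
  have tR: "t \<in> carrier R" using t SR by blast
  have frac: "left_fraction Q \<phi> s1 r1 \<in> carrier Q" "left_fraction Q \<phi> s2 r2 \<in> carrier Q"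
    using D(3) s1 s2 r1 r2 by (auto simp: ring_hom_closed[OF D(2)])
  have wQ: "\<phi> (t \<otimes> s1) \<in> carrier Q"
    using ts1 D(3) by blast
  have "\<phi> (t \<otimes> s1) \<otimes>\<^bsub>Q\<^esub> (left_fraction Q \<phi> s1 r1 \<otimes>\<^bsub>Q\<^esub> left_fraction Q \<phi> s2 r2)
      = (\<phi> (t \<otimes> s1) \<otimes>\<^bsub>Q\<^esub> left_fraction Q \<phi> s1 r1) \<otimes>\<^bsub>Q\<^esub> left_fraction Q \<phi> s2 r2"
    using frac wQ by (simp add: Q.m_assoc)
  also have "\<dots> = \<phi> (a \<otimes> s2) \<otimes>\<^bsub>Q\<^esub> left_fraction Q \<phi> s2 r2"
    by (simp only: left_fraction_cancel[OF L SR s1 tR r1] eq)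
  also have "\<dots> = \<phi> (a \<otimes> r2)"
    using left_fraction_cancel[OF L SR s2 a r2] .
  finally show ?thesis
    using Q.eq_Units_inv_mult_iff[OF D(3)[OF ts1]] frac a r2
    by (simp add: ring_hom_closed[OF D(2)])
qed

end

definition fraction_transfer ::
    "'a ring \<Rightarrow> 'a set \<Rightarrow> 'b ring \<Rightarrow> ('a \<Rightarrow> 'b) \<Rightarrow> 'c ring \<Rightarrow> ('a \<Rightarrow> 'c) \<Rightarrow> 'b \<Rightarrow> 'c" where
  "fraction_transfer R S Q \<phi> Q' \<psi> q = (SOME q'. \<exists>s \<in> S. \<exists>r \<in> carrier R.
      q = left_fraction Q \<phi> s r \<and> q' = left_fraction Q' \<psi> s r)"

context plain_ring
begin

lemma fraction_transfer_left_fraction: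
  assumes L: "left_ring_of_fractions R S Q \<phi>" and L': "left_ring_of_fractions R S Q' \<psi>"
    and LO: "left_ore_set R S" and s: "s \<in> S" and r: "r \<in> carrier R"
  shows "fraction_transfer R S Q \<phi> Q' \<psi> (left_fraction Q \<phi> s r) = left_fraction Q' \<psi> s r"
  unfolding fraction_transfer_def
proof (rule someI2_ex)
  show "\<exists>q'. \<exists>s' \<in> S. \<exists>r' \<in> carrier R.
      left_fraction Q \<phi> s r = left_fraction Q \<phi> s' r' \<and> q' = left_fraction Q' \<psi> s' r'"
    using s r by blast
next
  fix q' assume "\<exists>s' \<in> S. \<exists>r' \<in> carrier R.
      left_fraction Q \<phi> s r = left_fraction Q \<phi> s' r' \<and> q' = left_fraction Q' \<psi> s' r'"
  then obtain s' r' where s': "s' \<in> S" and r': "r' \<in> carrier R"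
    and eq: "left_fraction Q \<phi> s r = left_fraction Q \<phi> s' r'" and q': "q' = left_fraction Q' \<psi> s' r'"
    by blast
  show "q' = left_fraction Q' \<psi> s r"
    using eq q' left_fraction_eq_iff[OF L LO s s' r r'] left_fraction_eq_iff[OF L' LO s s' r r'] by simp
qed

lemma fraction_transfer_mult:
  assumes L: "left_ring_of_fractions R S Q \<phi>" and L': "left_ring_of_fractions R S Q' \<psi>"
    and LO: "left_ore_set R S" and x: "x \<in> carrier Q" and y: "y \<in> carrier Q"
  shows "fraction_transfer R S Q \<phi> Q' \<psi> (x \<otimes>\<^bsub>Q\<^esub> y)
    = fraction_transfer R S Q \<phi> Q' \<psi> x \<otimes>\<^bsub>Q'\<^esub> fraction_transfer R S Q \<phi> Q' \<psi> y"
proof -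
  obtain s1 r1 s2 r2 where s1: "s1 \<in> S" "r1 \<in> carrier R" "x = left_fraction Q \<phi> s1 r1"
    and s2: "s2 \<in> S" "r2 \<in> carrier R" "y = left_fraction Q \<phi> s2 r2"
    using left_ring_of_fractionsD(4)[OF L] x y by metis
  obtain t a where t: "t \<in> S" "a \<in> carrier R" "t \<otimes> r1 = a \<otimes> s2"
    using LO s1(2) s2(1) unfolding left_ore_set_def by blast
  have "t \<otimes> s1 \<in> S"
    using LO t(1) s1(1) by (simp add: left_ore_set_def mult_closed_set_def)
  moreover have "a \<otimes> r2 \<in> carrier R"
    using t s2 by blast
  ultimately show ?thesis
    using s1 s2 t fraction_transfer_left_fraction[OF L L' LO]
      left_fraction_mult[OF L LO] left_fraction_mult[OF L' LO] by simp
qed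

lemma fraction_transfer_add:
  assumes L: "left_ring_of_fractions R S Q \<phi>" and L': "left_ring_of_fractions R S Q' \<psi>"
    and LO: "left_ore_set R S" and x: "x \<in> carrier Q" and y: "y \<in> carrier Q"
  shows "fraction_transfer R S Q \<phi> Q' \<psi> (x \<oplus>\<^bsub>Q\<^esub> y)
    = fraction_transfer R S Q \<phi> Q' \<psi> x \<oplus>\<^bsub>Q'\<^esub> fraction_transfer R S Q \<phi> Q' \<psi> y"
proof -
  have SR: "S \<subseteq> carrier R"
    using LO by (simp add: left_ore_set_def mult_closed_set_def)
  obtain s1 r1 s2 r2 where s1: "s1 \<in> S" "r1 \<in> carrier R" "x = left_fraction Q \<phi> s1 r1"
    and s2: "s2 \<in> S" "r2 \<in> carrier R" "y = left_fraction Q \<phi> s2 r2"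
    using left_ring_of_fractionsD(4)[OF L] x y by metis
  obtain t a where t: "t \<in> S" "a \<in> carrier R" "t \<otimes> s1 = a \<otimes> s2"
    using LO SR s1(1) s2(1) unfolding left_ore_set_def by blast
  have "t \<otimes> s1 \<in> S"
    using LO t(1) s1(1) by (simp add: left_ore_set_def mult_closed_set_def)
  moreover have "t \<otimes> r1 \<oplus> a \<otimes> r2 \<in> carrier R"
    using SR t s1 s2 by blast
  ultimately show ?thesis
    using s1 s2 t fraction_transfer_left_fraction[OF L L' LO]
      left_fraction_add[OF L LO] left_fraction_add[OF L' LO] by simp
qed

lemma fraction_transfer_ring_hom:
  assumes L: "left_ring_of_fractions R S Q \<phi>" and L': "left_ring_of_fractions R S Q' \<psi>"
    and LO: "left_ore_set R S"
  shows "fraction_transfer R S Q \<phi> Q' \<psi> \<in> ring_hom Q Q'"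
proof -
  note D = left_ring_of_fractionsD[OF L] and D' = left_ring_of_fractionsD[OF L']
  interpret Q: plain_ring Q by (simp add: plain_ring_iff_ring D(1))
  interpret Q': plain_ring Q' by (simp add: plain_ring_iff_ring D'(1))
  have "fraction_transfer R S Q \<phi> Q' \<psi> x \<in> carrier Q'" if x: "x \<in> carrier Q" for x
  proof -
    obtain s r where "s \<in> S" "r \<in> carrier R" "x = left_fraction Q \<phi> s r"
      using D(4)[OF x] by blast
    then show ?thesis
      using fraction_transfer_left_fraction[OF L L' LO] D'(3) by (simp add: ring_hom_closed[OF D'(2)])
  qed
  moreover have "fraction_transfer R S Q \<phi> Q' \<psi> \<one>\<^bsub>Q\<^esub> = \<one>\<^bsub>Q'\<^esub>"
  proof -
    have "\<one> \<in> S"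
      using LO by (simp add: left_ore_set_def mult_closed_set_def)
    then show ?thesis
      using fraction_transfer_left_fraction[OF L L' LO, of \<one> \<one>] D(3) D'(3)
      by (simp add: ring_hom_one[OF D(2)] ring_hom_one[OF D'(2)])
  qed
  ultimately show ?thesis
    using fraction_transfer_mult[OF L L' LO] fraction_transfer_add[OF L L' LO]
    by (intro ring_hom_memI) blast+
qed

lemma fraction_transfer_inverse:
  assumes L: "left_ring_of_fractions R S Q \<phi>" and L': "left_ring_of_fractions R S Q' \<psi>"
    and LO: "left_ore_set R S" and q: "q \<in> carrier Q"
  shows "fraction_transfer R S Q' \<psi> Q \<phi> (fraction_transfer R S Q \<phi> Q' \<psi> q) = q"
proof -
  obtain s r where "s \<in> S" "r \<in> carrier R" "q = left_fraction Q \<phi> s r"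
    using left_ring_of_fractionsD(4)[OF L q] by blast
  then show ?thesis
    using fraction_transfer_left_fraction[OF L L' LO] fraction_transfer_left_fraction[OF L' L LO] by simp
qed

theorem left_ring_of_fractions_iso:
  assumes L: "left_ring_of_fractions R S Q \<phi>" and L': "left_ring_of_fractions R S Q' \<psi>"
    and LO: "left_ore_set R S"
  shows "Q \<simeq> Q'"
proof -
  have hom: "fraction_transfer R S Q \<phi> Q' \<psi> \<in> ring_hom Q Q'"
    and hom': "fraction_transfer R S Q' \<psi> Q \<phi> \<in> ring_hom Q' Q"
    using fraction_transfer_ring_hom L L' LO by blast+
  have "bij_betw (fraction_transfer R S Q \<phi> Q' \<psi>) (carrier Q) (carrier Q')"
    by (rule bij_betw_byWitness[where f' = "fraction_transfer R S Q' \<psi> Q \<phi>"])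
      (use fraction_transfer_inverse[OF L L' LO] fraction_transfer_inverse[OF L' L LO]
        ring_hom_closed[OF hom] ring_hom_closed[OF hom'] in auto)
  then show ?thesis
    using hom unfolding is_ring_iso_def ring_iso_def by blast
qed

end

theorem theorem4p5:
  fixes R :: "'a ring"
  assumes "ring R" and "\<one>\<^bsub>R\<^esub> \<noteq> \<zero>\<^bsub>R\<^esub>"
  defines "C \<equiv> regular_elems R"
  shows
    "((\<exists>(Q :: 'a frac_ring) \<phi>. left_ring_of_fractions R (S_0 R) Q \<phi> \<and> semisimple_ring Q)
       \<longleftrightarrow>
      (left_ore_set R C \<and> right_ore_set R C \<and>
       (\<exists>(Q :: 'a frac_ring) \<phi>. left_ring_of_fractions R C Q \<phi> \<and> semisimple_ring Q) \<and>
       (\<exists>(Q :: 'a frac_ring) \<phi>. right_ring_of_fractions R C Q \<phi> \<and> semisimple_ring Q)))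
     \<and>
     ((\<exists>(Q :: 'a frac_ring) \<phi>. left_ring_of_fractions R (S_0 R) Q \<phi> \<and> semisimple_ring Q)
       \<longleftrightarrow>
      ((\<exists>(Q :: 'a frac_ring) \<phi>. left_ring_of_fractions R (S_l0 R) Q \<phi> \<and> semisimple_ring Q) \<and>
       (\<exists>(Q :: 'a frac_ring) \<phi>. right_ring_of_fractions R (S_r0 R) Q \<phi> \<and> semisimple_ring Q)))
     \<and>
     ((\<exists>(Q :: 'a frac_ring) \<phi>. left_ring_of_fractions R (S_0 R) Q \<phi> \<and> semisimple_ring Q) \<longrightarrow>
       S_0 R = C \<and>
       (\<forall>(Q0 :: 'a frac_ring) \<phi>0 (Q1 :: 'a frac_ring) \<phi>1 (Q2 :: 'a frac_ring) \<phi>2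
          (Q3 :: 'a frac_ring) \<phi>3 (Q4 :: 'a frac_ring) \<phi>4.
          left_ring_of_fractions R (S_0 R) Q0 \<phi>0 \<and>
          left_ring_of_fractions R C Q1 \<phi>1 \<and>
          right_ring_of_fractions R C Q2 \<phi>2 \<and>
          left_ring_of_fractions R (S_l0 R) Q3 \<phi>3 \<and>
          right_ring_of_fractions R (S_r0 R) Q4 \<phi>4 \<longrightarrow>
          Q0 \<simeq> Q1 \<and> Q1 \<simeq> Q2 \<and> Q2 \<simeq> Q3 \<and> Q3 \<simeq> Q4))"
proof -
  interpret plain_ring R using assms(1) by (simp add: plain_ring_iff_ring)
  note nz = assms(2)
  let ?Ore = "left_ore_set R C \<and> right_ore_set R C"
  have eqs: "S_0 R = C \<and> S_l0 R = C \<and> S_r0 R = C" if ?Ore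
    using that S_0_eq_regular_elems S_l0_eq_regular_elems S_r0_eq_regular_elems unfolding C_def by blast
  have sides: "left_ring_of_fractions R C Q \<phi> \<longleftrightarrow> right_ring_of_fractions R C Q \<phi>"
    if ?Ore for Q :: "'a frac_ring" and \<phi>
    using that right_ring_of_fractions_if_left left_ring_of_fractions_if_right unfolding C_def by blast
  have Ore_S_0: ?Ore if "left_ring_of_fractions R (S_0 R) Q \<phi>" "semisimple_ring Q" for Q :: "'a frac_ring" and \<phi>
    using Ore_regular_elems_if_semisimple_S_0[OF nz that] unfolding C_def .
  have Ore_S_l0_S_r0: ?Ore if "left_ring_of_fractions R (S_l0 R) Q \<phi>" "semisimple_ring Q"
    "right_ring_of_fractions R (S_r0 R) Q' \<phi>'" "semisimple_ring Q'" for Q Q' :: "'a frac_ring" and \<phi> \<phi>'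
    using left_ore_set_regular_elems_if_semisimple[OF that(1) S_l0_subset_regular_elems[OF nz] that(2) nz]
      right_ore_set_regular_elems_if_semisimple[OF that(3) S_r0_subset_regular_elems[OF nz] that(4) nz]
    unfolding C_def by blast
  have iso: "Q \<simeq> Q'" if ?Ore "left_ring_of_fractions R C Q \<phi>" "left_ring_of_fractions R C Q' \<psi>"
    for Q Q' :: "'a frac_ring" and \<phi> \<psi>
    using left_ring_of_fractions_iso that by blast
  show ?thesis
    using eqs sides Ore_S_0 Ore_S_l0_S_r0 iso by metis
qed

end
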